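(* Let $0<r<1$ be fixed and for each $n$ let $\mathbf{X},\mathbf{Y}\sim N(0,\Sigma)$ be independent, where $\Sigma=(1-r)I_n+r\mathbf{1}\mathbf{1}^\top$. Then (i) $\sqrt n\,T_n\xrightarrow{d}N(0,(1-r)^2)$ and (ii) $\sqrt n\,\rho_n\xrightarrow{d}N(0,1)$.
   Context: Sample covariance $T_n=\frac1n\sum_{i=1}^n(X_i-\overline{\mathbf{X}}_n)(Y_i-\overline{\mathbf{Y}}_n)$; sample correlation $\rho_n=\frac{\sum_{i}(X_i-\overline{\mathbf{X}}_n)(Y_i-\overline{\mathbf{Y}}_n)}{\sqrt{\sum_i(X_i-\overline{\mathbf{X}}_n)^2}\sqrt{\sum_i(Y_i-\overline{\mathbf{Y}}_n)^2}}$, with $\overline{\mathbf{X}}_n,\overline{\mathbf{Y}}_n$ the sample means; $\mathbf{1}$ is the all-ones vector. *)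

theory Defs
  imports "HOL-Probability.Probability"
begin

definition equicorr :: "real \<Rightarrow> nat \<Rightarrow> nat \<Rightarrow> real" where
  "equicorr r i j = (1 - r) * (if i = j then 1 else 0) + r"

text \<open>Centered multivariate normal N(0, S) for the random vector (X 0, ..., X (n-1)) on M,
  via the standard (Cramer--Wold) definition: every linear form a . X is N(0, a^T S a),
  degenerate (a.s. zero) when the variance a^T S a vanishes.\<close>
definition is_mvn0 :: "'a measure \<Rightarrow> nat \<Rightarrow> (nat \<Rightarrow> nat \<Rightarrow> real) \<Rightarrow> (nat \<Rightarrow> 'a \<Rightarrow> real) \<Rightarrow> bool" where
  "is_mvn0 M n S X \<longleftrightarrow>
     (\<forall>i<n. X i \<in> borel_measurable M) \<and>
     (\<forall>a :: nat \<Rightarrow> real.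
        let q = (\<Sum>i<n. \<Sum>j<n. a i * S i j * a j) in
        (0 < q \<longrightarrow> distributed M lborel (\<lambda>\<omega>. \<Sum>i<n. a i * X i \<omega>) (normal_density 0 (sqrt q))) \<and>
        (q = 0 \<longrightarrow> (AE \<omega> in M. (\<Sum>i<n. a i * X i \<omega>) = 0)))"

definition sample_mean :: "nat \<Rightarrow> (nat \<Rightarrow> real) \<Rightarrow> real" where
  "sample_mean n x = (\<Sum>i<n. x i) / real n"

definition sample_cov :: "nat \<Rightarrow> (nat \<Rightarrow> real) \<Rightarrow> (nat \<Rightarrow> real) \<Rightarrow> real" where
  "sample_cov n x y = (\<Sum>i<n. (x i - sample_mean n x) * (y i - sample_mean n y)) / real n"

definition sample_corr :: "nat \<Rightarrow> (nat \<Rightarrow> real) \<Rightarrow> (nat \<Rightarrow> real) \<Rightarrow> real" where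
  "sample_corr n x y =
     (\<Sum>i<n. (x i - sample_mean n x) * (y i - sample_mean n y)) /
     (sqrt (\<Sum>i<n. (x i - sample_mean n x)\<^sup>2) * sqrt (\<Sum>i<n. (y i - sample_mean n y)\<^sup>2))"

end

theory Submission
  imports Defs
begin

text \<open>Given \<open>Y\<close>, the statistic \<open>sqrt n T\<^sub>n\<close> is a linear form in the Gaussian vector \<open>X\<close> whose
  coefficients, the centred \<open>Y\<^sub>i / sqrt n\<close>, sum to zero; hence the equicorrelated part
  \<open>r 1 1\<^sup>T\<close> of the covariance drops out and \<open>sqrt n T\<^sub>n\<close> is conditionally
  \<open>N(0, (1 - r) S\<^sub>Y / n)\<close>, where \<open>S\<^sub>Y\<close> is the centred sum of squares of \<open>Y\<close>.
  Isserlis' formula gives \<open>E (S\<^sub>Y / n - (1 - r))\<^sup>2 = O(1/n)\<close>, so the characteristic function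
  \<open>E exp (- t\<^sup>2 (1 - r) S\<^sub>Y / (2 n))\<close> tends to \<open>exp (- t\<^sup>2 (1 - r)\<^sup>2 / 2)\<close>.
  Since \<open>sqrt n \<rho>\<^sub>n = sqrt n T\<^sub>n / sqrt (S\<^sub>X S\<^sub>Y / n\<^sup>2)\<close>, the same second-moment bounds make its
  characteristic function close to that of \<open>sqrt n T\<^sub>n / (1 - r)\<close>.
  Both limits then follow from Levy's continuity theorem.\<close>

definition bilin_form :: "nat \<Rightarrow> (nat \<Rightarrow> nat \<Rightarrow> real) \<Rightarrow> (nat \<Rightarrow> real) \<Rightarrow> (nat \<Rightarrow> real) \<Rightarrow> real" where
  "bilin_form n S a b = (\<Sum>i<n. \<Sum>j<n. a i * S i j * b j)"

abbreviation quad_form :: "nat \<Rightarrow> (nat \<Rightarrow> nat \<Rightarrow> real) \<Rightarrow> (nat \<Rightarrow> real) \<Rightarrow> real" where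
  "quad_form n S a \<equiv> bilin_form n S a a"

lemma bilin_form_add_left: "bilin_form n S (\<lambda>i. a i + b i) c = bilin_form n S a c + bilin_form n S b c"
  unfolding bilin_form_def by (simp add: distrib_right sum.distrib)

lemma bilin_form_add_right: "bilin_form n S a (\<lambda>i. b i + c i) = bilin_form n S a b + bilin_form n S a c"
  unfolding bilin_form_def by (simp add: distrib_left sum.distrib)

lemma bilin_form_diff_left: "bilin_form n S (\<lambda>i. a i - b i) c = bilin_form n S a c - bilin_form n S b c"
  unfolding bilin_form_def by (simp add: left_diff_distrib sum_subtractf)

lemma bilin_form_diff_right: "bilin_form n S a (\<lambda>i. b i - c i) = bilin_form n S a b - bilin_form n S a c"
  unfolding bilin_form_def by (simp add: right_diff_distrib sum_subtractf)

lemma bilin_form_commute: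
  assumes "\<And>i j. S i j = S j i"
  shows "bilin_form n S a b = bilin_form n S b a"
  unfolding bilin_form_def by (subst sum.swap) (simp add: assms ac_simps)

lemma bilin_form_equicorr:
  "bilin_form n (equicorr r) a b = (1 - r) * (\<Sum>i<n. a i * b i) + r * (\<Sum>i<n. a i) * (\<Sum>j<n. b j)"
proof -
  have "bilin_form n (equicorr r) a b
      = (\<Sum>i<n. \<Sum>j<n. (1 - r) * (if i = j then a i * b j else 0) + r * (a i * b j))"
    unfolding bilin_form_def equicorr_def by (intro sum.cong refl) (auto simp: algebra_simps)
  also have "\<dots> = (1 - r) * (\<Sum>i<n. a i * b i) + r * (\<Sum>i<n. \<Sum>j<n. a i * b j)"
    by (simp add: sum.distrib sum_distrib_left if_distrib[of "\<lambda>x. (1 - r) * x"] cong: if_cong)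
  finally show ?thesis by (simp add: sum_product mult.assoc)
qed

lemma quad_form_equicorr_nonneg:
  assumes "0 \<le> r" "r \<le> 1"
  shows "0 \<le> quad_form n (equicorr r) a"
proof -
  have "quad_form n (equicorr r) a = (1 - r) * (\<Sum>i<n. (a i)\<^sup>2) + r * (\<Sum>i<n. a i)\<^sup>2"
    by (simp add: bilin_form_equicorr power2_eq_square)
  then show ?thesis
    using assms by (simp add: add_nonneg_nonneg mult_nonneg_nonneg sum_nonneg)
qed

lemma distr_std_normal_scaled:
  assumes "0 < s"
  shows "distr std_normal_distribution borel (\<lambda>x. s * x) = density lborel (normal_density 0 s)"
proof -
  interpret std: prob_space std_normal_distribution
    using prob_space_normal_density[of 1 0] by simp
  have "distributed std_normal_distribution lborel (\<lambda>x. x) std_normal_density"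
    unfolding distributed_def by (auto simp: distr_id2)
  then have "distributed std_normal_distribution lborel (\<lambda>x. 0 + s * x) (normal_density (0 + s * 0) (\<bar>s\<bar> * 1))"
    by (rule std.normal_density_affine) (use assms in auto)
  then have "distr std_normal_distribution lborel (\<lambda>x. s * x) = density lborel (normal_density 0 s)"
    using assms unfolding distributed_def by simp
  then show ?thesis by (metis distr_cong sets_lborel)
qed

lemma char_normal_density:
  assumes "0 < s"
  shows "char (density lborel (normal_density 0 s)) t = complex_of_real (exp (- (t\<^sup>2 * s\<^sup>2) / 2))"
proof -
  have "char (density lborel (normal_density 0 s)) t = char std_normal_distribution (t * s)"
    unfolding distr_std_normal_scaled[OF assms, symmetric] char_def
    by (subst integral_distr) (auto simp: ac_simps)
  then show ?thesis by (simp add: char_std_normal_distribution power_mult_distrib)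
qed

lemma real_distribution_normal_density:
  "0 < s \<Longrightarrow> real_distribution (density lborel (normal_density 0 s))"
  using prob_space_normal_density[of s 0] by (auto simp: real_distribution_def real_distribution_axioms_def)

lemma std_normal_second_moment:
  "integrable std_normal_distribution (\<lambda>x. x ^ 2)" "(\<integral>x. x ^ 2 \<partial>std_normal_distribution) = 1"
  using std_normal_distribution_even_moments[of 1] by (auto simp: numeral_eq_Suc)

lemma std_normal_fourth_moment:
  "integrable std_normal_distribution (\<lambda>x. x ^ 4)" "(\<integral>x. x ^ 4 \<partial>std_normal_distribution) = 3"
  using std_normal_distribution_even_moments[of 2] by (auto simp: numeral_eq_Suc fact_numeral)

locale centered_gaussian = prob_space M for M :: "'a measure" +
  fixes n :: nat and S :: "nat \<Rightarrow> nat \<Rightarrow> real" and Z :: "nat \<Rightarrow> 'a \<Rightarrow> real"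
  assumes gaussian: "is_mvn0 M n S Z"
    and quad_form_nonneg: "\<And>a. 0 \<le> quad_form n S a"
begin

lemma measurable_component[measurable]: "i < n \<Longrightarrow> Z i \<in> borel_measurable M"
  using gaussian unfolding is_mvn0_def by auto

lemma linear_form_add: "(\<Sum>i<n. (a i + b i) * Z i \<omega>) = (\<Sum>i<n. a i * Z i \<omega>) + (\<Sum>i<n. b i * Z i \<omega>)"
  by (simp add: distrib_right sum.distrib)

lemma linear_form_diff: "(\<Sum>i<n. (a i - b i) * Z i \<omega>) = (\<Sum>i<n. a i * Z i \<omega>) - (\<Sum>i<n. b i * Z i \<omega>)"
  by (simp add: left_diff_distrib sum_subtractf)

lemma distr_linear_form:
  "distr M borel (\<lambda>\<omega>. \<Sum>i<n. a i * Z i \<omega>)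
     = distr std_normal_distribution borel (\<lambda>x. sqrt (quad_form n S a) * x)"
proof (cases "quad_form n S a = 0")
  case True
  interpret std: prob_space std_normal_distribution
    using prob_space_normal_density[of 1 0] by simp
  have "AE \<omega> in M. (\<Sum>i<n. a i * Z i \<omega>) = 0"
    using gaussian True unfolding is_mvn0_def bilin_form_def Let_def by auto
  then have "distr M borel (\<lambda>\<omega>. \<Sum>i<n. a i * Z i \<omega>) = distr M borel (\<lambda>\<omega>. 0)"
    by (intro distr_cong_AE) auto
  also have "\<dots> = return borel 0"
    by (simp add: distr_const)
  also have "\<dots> = distr std_normal_distribution borel (\<lambda>x. sqrt (quad_form n S a) * x)"
    using True by (simp add: std.distr_const)
  finally show ?thesis .
next
  case False
  then have q: "0 < quad_form n S a" using quad_form_nonneg[of a] by simp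
  then have "distributed M lborel (\<lambda>\<omega>. \<Sum>i<n. a i * Z i \<omega>) (normal_density 0 (sqrt (quad_form n S a)))"
    using gaussian unfolding is_mvn0_def bilin_form_def Let_def by auto
  then have "distr M lborel (\<lambda>\<omega>. \<Sum>i<n. a i * Z i \<omega>) = density lborel (normal_density 0 (sqrt (quad_form n S a)))"
    unfolding distributed_def by simp
  moreover have "distr M borel (\<lambda>\<omega>. \<Sum>i<n. a i * Z i \<omega>) = distr M lborel (\<lambda>\<omega>. \<Sum>i<n. a i * Z i \<omega>)"
    by (rule distr_cong) auto
  ultimately show ?thesis using distr_std_normal_scaled[of "sqrt (quad_form n S a)"] q by simp
qed

lemma
  fixes g :: "real \<Rightarrow> 'b::{banach,second_countable_topology}"
  assumes [measurable]: "g \<in> borel_measurable borel"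
  shows integral_linear_form:
      "(\<integral>\<omega>. g (\<Sum>i<n. a i * Z i \<omega>) \<partial>M) = (\<integral>x. g (sqrt (quad_form n S a) * x) \<partial>std_normal_distribution)"
    and integrable_linear_form_iff:
      "integrable M (\<lambda>\<omega>. g (\<Sum>i<n. a i * Z i \<omega>))
         \<longleftrightarrow> integrable std_normal_distribution (\<lambda>x. g (sqrt (quad_form n S a) * x))"
  using integral_distr[of "\<lambda>\<omega>. \<Sum>i<n. a i * Z i \<omega>" M borel g]
    integral_distr[of "\<lambda>x. sqrt (quad_form n S a) * x" std_normal_distribution borel g]
    integrable_distr_eq[of "\<lambda>\<omega>. \<Sum>i<n. a i * Z i \<omega>" M borel g]
    integrable_distr_eq[of "\<lambda>x. sqrt (quad_form n S a) * x" std_normal_distribution borel g]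
  by (simp_all add: distr_linear_form)

lemma linear_form_second_moment:
  "integrable M (\<lambda>\<omega>. (\<Sum>i<n. a i * Z i \<omega>) ^ 2)"
  "(\<integral>\<omega>. (\<Sum>i<n. a i * Z i \<omega>) ^ 2 \<partial>M) = quad_form n S a"
proof -
  have eq: "(\<lambda>x. (sqrt (quad_form n S a) * x) ^ 2) = (\<lambda>x. quad_form n S a * x ^ 2)"
    using quad_form_nonneg[of a] by (auto simp: power_mult_distrib)
  show "integrable M (\<lambda>\<omega>. (\<Sum>i<n. a i * Z i \<omega>) ^ 2)"
    using integrable_linear_form_iff[of "\<lambda>x. x ^ 2" a] std_normal_second_moment by (simp add: eq)
  show "(\<integral>\<omega>. (\<Sum>i<n. a i * Z i \<omega>) ^ 2 \<partial>M) = quad_form n S a"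
    using integral_linear_form[of "\<lambda>x. x ^ 2" a] std_normal_second_moment by (simp add: eq)
qed

lemma linear_form_fourth_moment:
  "integrable M (\<lambda>\<omega>. (\<Sum>i<n. a i * Z i \<omega>) ^ 4)"
  "(\<integral>\<omega>. (\<Sum>i<n. a i * Z i \<omega>) ^ 4 \<partial>M) = 3 * (quad_form n S a)\<^sup>2"
proof -
  have "(sqrt (quad_form n S a) * x) ^ 4 = (quad_form n S a)\<^sup>2 * x ^ 4" for x
  proof -
    have "(sqrt (quad_form n S a) * x) ^ 4 = ((sqrt (quad_form n S a))\<^sup>2)\<^sup>2 * x ^ 4"
      by (simp add: power_mult_distrib flip: power_mult)
    then show ?thesis using quad_form_nonneg[of a] by simp
  qed
  then have eq: "(\<lambda>x. (sqrt (quad_form n S a) * x) ^ 4) = (\<lambda>x. (quad_form n S a)\<^sup>2 * x ^ 4)"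
    by auto
  show "integrable M (\<lambda>\<omega>. (\<Sum>i<n. a i * Z i \<omega>) ^ 4)"
    using integrable_linear_form_iff[of "\<lambda>x. x ^ 4" a] std_normal_fourth_moment by (simp add: eq)
  show "(\<integral>\<omega>. (\<Sum>i<n. a i * Z i \<omega>) ^ 4 \<partial>M) = 3 * (quad_form n S a)\<^sup>2"
    using integral_linear_form[of "\<lambda>x. x ^ 4" a] std_normal_fourth_moment by (simp add: eq)
qed

lemma nn_integral_linear_form_sq:
  "(\<integral>\<^sup>+\<omega>. ennreal ((\<Sum>i<n. a i * Z i \<omega>)\<^sup>2) \<partial>M) = ennreal (quad_form n S a)"
  using linear_form_second_moment[of a] by (subst nn_integral_eq_integral) auto

lemma char_linear_form:
  "(\<integral>\<omega>. iexp (t * (\<Sum>i<n. a i * Z i \<omega>)) \<partial>M) = complex_of_real (exp (- (t\<^sup>2 * quad_form n S a) / 2))"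
proof -
  have "(\<integral>\<omega>. iexp (t * (\<Sum>i<n. a i * Z i \<omega>)) \<partial>M) = char std_normal_distribution (t * sqrt (quad_form n S a))"
    unfolding char_def by (subst integral_linear_form) (auto simp: ac_simps)
  then show ?thesis
    using quad_form_nonneg[of a] by (simp add: char_std_normal_distribution power_mult_distrib)
qed

lemma sq_mult_sq_polarization:
  fixes u v :: real
  shows "u\<^sup>2 * v\<^sup>2 = ((u + v) ^ 4 + (u - v) ^ 4 - 2 * u ^ 4 - 2 * v ^ 4) / 12"
  by (simp add: power_def algebra_simps)

text \<open>Isserlis' formula for the fourth moment, obtained by polarizing the fourth moments of the
  linear forms with coefficients \<open>a \<pm> b\<close>.\<close>
lemma linear_form_sq_mult_sq:
  assumes sym: "\<And>i j. S i j = S j i"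
  shows "integrable M (\<lambda>\<omega>. (\<Sum>i<n. a i * Z i \<omega>)\<^sup>2 * (\<Sum>i<n. b i * Z i \<omega>)\<^sup>2)"
    and "(\<integral>\<omega>. (\<Sum>i<n. a i * Z i \<omega>)\<^sup>2 * (\<Sum>i<n. b i * Z i \<omega>)\<^sup>2 \<partial>M)
           = quad_form n S a * quad_form n S b + 2 * (bilin_form n S a b)\<^sup>2"
proof -
  let ?L = "\<lambda>c \<omega>. \<Sum>i<n. c i * Z i \<omega>"
  let ?P = "\<lambda>\<omega>. ((?L (\<lambda>i. a i + b i) \<omega>) ^ 4 + (?L (\<lambda>i. a i - b i) \<omega>) ^ 4
                 - 2 * (?L a \<omega>) ^ 4 - 2 * (?L b \<omega>) ^ 4) / 12"
  have polar: "(\<lambda>\<omega>. (?L a \<omega>)\<^sup>2 * (?L b \<omega>)\<^sup>2) = ?P"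
    unfolding linear_form_add linear_form_diff by (rule ext) (rule sq_mult_sq_polarization)
  note m4 = linear_form_fourth_moment
  have "integrable M ?P"
    using m4(1) by auto
  then show "integrable M (\<lambda>\<omega>. (?L a \<omega>)\<^sup>2 * (?L b \<omega>)\<^sup>2)"
    unfolding polar .
  have "quad_form n S (\<lambda>i. a i + b i) = quad_form n S a + quad_form n S b + 2 * bilin_form n S a b"
    "quad_form n S (\<lambda>i. a i - b i) = quad_form n S a + quad_form n S b - 2 * bilin_form n S a b"
    unfolding bilin_form_add_left bilin_form_add_right bilin_form_diff_left bilin_form_diff_right
      bilin_form_commute[OF sym, where a=b and b=a] by simp_all
  moreover have "integral\<^sup>L M ?P = (3 * (quad_form n S (\<lambda>i. a i + b i))\<^sup>2 + 3 * (quad_form n S (\<lambda>i. a i - b i))\<^sup>2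
      - 6 * (quad_form n S a)\<^sup>2 - 6 * (quad_form n S b)\<^sup>2) / 12"
    using m4(1) by (simp add: m4(2))
  ultimately show "(\<integral>\<omega>. (?L a \<omega>)\<^sup>2 * (?L b \<omega>)\<^sup>2 \<partial>M) = quad_form n S a * quad_form n S b + 2 * (bilin_form n S a b)\<^sup>2"
    unfolding polar by (simp only:) (simp add: power2_eq_square algebra_simps)
qed

end

definition centering_weight :: "nat \<Rightarrow> nat \<Rightarrow> nat \<Rightarrow> real" where
  "centering_weight n i k = (if k = i then 1 else 0) - 1 / real n"

definition sum_sq_dev :: "nat \<Rightarrow> (nat \<Rightarrow> real) \<Rightarrow> real" where
  "sum_sq_dev n z = (\<Sum>i<n. (z i - sample_mean n z)\<^sup>2)"

lemma deviation_eq_centering: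
  "i < n \<Longrightarrow> z i - sample_mean n z = (\<Sum>k<n. centering_weight n i k * z k)"
  unfolding centering_weight_def sample_mean_def
  by (simp add: left_diff_distrib sum_subtractf sum_divide_distrib if_distrib[of "\<lambda>x. x * _"] cong: if_cong)

lemma sum_sq_dev_eq_centering: "sum_sq_dev n z = (\<Sum>i<n. (\<Sum>k<n. centering_weight n i k * z k)\<^sup>2)"
  unfolding sum_sq_dev_def by (intro sum.cong refl) (simp add: deviation_eq_centering)

lemma sum_sq_dev_nonneg: "0 \<le> sum_sq_dev n z"
  unfolding sum_sq_dev_def by (simp add: sum_nonneg)

lemma sum_centering_weight: "i < n \<Longrightarrow> (\<Sum>k<n. centering_weight n i k) = 0"
  unfolding centering_weight_def by (simp add: sum_subtractf)

lemma inner_centering_weight: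
  assumes "i < n" "j < n"
  shows "(\<Sum>k<n. centering_weight n i k * centering_weight n j k) = (if i = j then 1 else 0) - 1 / real n"
proof -
  have "(\<Sum>k<n. centering_weight n i k * centering_weight n j k)
      = (\<Sum>k<n. (if k = i then 1 else 0) * (if k = j then 1 else 0)
          - (if k = i then 1 else 0) / real n - (if k = j then 1 else 0) / real n + 1 / (real n)\<^sup>2)"
    unfolding centering_weight_def by (intro sum.cong refl) (simp add: algebra_simps power2_eq_square)
  also have "\<dots> = (if i = j then 1 else 0) - 1 / real n - 1 / real n + real n / (real n)\<^sup>2"
    using assms by (simp add: sum.distrib sum_subtractf if_distrib[of "\<lambda>x. x * _"]
        flip: sum_divide_distrib cong: if_cong)
  also have "\<dots> = (if i = j then 1 else 0) - 1 / real n"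
    using assms by (simp add: power2_eq_square)
  finally show ?thesis .
qed

lemma bilin_form_equicorr_centering:
  assumes "i < n" "j < n"
  shows "bilin_form n (equicorr r) (centering_weight n i) (centering_weight n j)
           = (1 - r) * centering_weight n i j"
  using assms by (simp add: bilin_form_equicorr sum_centering_weight inner_centering_weight)
    (simp add: centering_weight_def)

lemma sum_sq_centering_weight: "i < n \<Longrightarrow> (\<Sum>j<n. (centering_weight n i j)\<^sup>2) = 1 - 1 / real n"
  using inner_centering_weight[of i n i] by (simp add: power2_eq_square)

locale equicorr_gaussian = prob_space M for M :: "'a measure" +
  fixes n :: nat and r :: real and Z :: "nat \<Rightarrow> 'a \<Rightarrow> real"
  assumes is_gaussian: "is_mvn0 M n (equicorr r) Z"
    and r_nonneg: "0 \<le> r" and r_le_1: "r \<le> 1"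

sublocale equicorr_gaussian \<subseteq> centered_gaussian M n "equicorr r" Z
  using is_gaussian quad_form_equicorr_nonneg[OF r_nonneg r_le_1] by unfold_locales

context equicorr_gaussian
begin

lemma sum_sq_dev_measurable[measurable]: "(\<lambda>\<omega>. sum_sq_dev n (\<lambda>k. Z k \<omega>)) \<in> borel_measurable M"
  unfolding sum_sq_dev_def sample_mean_def by measurable

lemma sum_sq_dev_first_moment:
  assumes "0 < n"
  shows "integrable M (\<lambda>\<omega>. sum_sq_dev n (\<lambda>k. Z k \<omega>))"
    and "(\<integral>\<omega>. sum_sq_dev n (\<lambda>k. Z k \<omega>) \<partial>M) = (1 - r) * (real n - 1)"
proof -
  note m2 = linear_form_second_moment
  show "integrable M (\<lambda>\<omega>. sum_sq_dev n (\<lambda>k. Z k \<omega>))"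
    unfolding sum_sq_dev_eq_centering using m2(1) by auto
  have "(\<integral>\<omega>. sum_sq_dev n (\<lambda>k. Z k \<omega>) \<partial>M) = (\<Sum>i<n. quad_form n (equicorr r) (centering_weight n i))"
    unfolding sum_sq_dev_eq_centering using m2(1) by (simp add: m2(2))
  also have "\<dots> = (\<Sum>i<n. (1 - r) * (1 - 1 / real n))"
    by (intro sum.cong refl) (simp add: bilin_form_equicorr_centering centering_weight_def)
  also have "\<dots> = (1 - r) * (real n - 1)"
    using assms by (simp add: field_simps)
  finally show "(\<integral>\<omega>. sum_sq_dev n (\<lambda>k. Z k \<omega>) \<partial>M) = (1 - r) * (real n - 1)" .
qed

lemma sum_sq_dev_second_moment:
  assumes "0 < n"
  shows "integrable M (\<lambda>\<omega>. (sum_sq_dev n (\<lambda>k. Z k \<omega>))\<^sup>2)"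
    and "(\<integral>\<omega>. (sum_sq_dev n (\<lambda>k. Z k \<omega>))\<^sup>2 \<partial>M) = (1 - r)\<^sup>2 * ((real n - 1)\<^sup>2 + 2 * (real n - 1))"
proof -
  have sym: "\<And>i j. equicorr r i j = equicorr r j i"
    unfolding equicorr_def by auto
  note m22 = linear_form_sq_mult_sq[OF sym]
  let ?W = "\<lambda>i \<omega>. (\<Sum>k<n. centering_weight n i k * Z k \<omega>)\<^sup>2"
  have sq: "(sum_sq_dev n (\<lambda>k. Z k \<omega>))\<^sup>2 = (\<Sum>i<n. \<Sum>j<n. ?W i \<omega> * ?W j \<omega>)" for \<omega>
    unfolding sum_sq_dev_eq_centering by (simp add: power2_eq_square sum_product)
  show "integrable M (\<lambda>\<omega>. (sum_sq_dev n (\<lambda>k. Z k \<omega>))\<^sup>2)"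
    unfolding sq using m22(1) by auto
  have "(\<integral>\<omega>. (sum_sq_dev n (\<lambda>k. Z k \<omega>))\<^sup>2 \<partial>M) = (\<Sum>i<n. \<Sum>j<n. \<integral>\<omega>. ?W i \<omega> * ?W j \<omega> \<partial>M)"
    unfolding sq using m22(1) by (simp add: Bochner_Integration.integral_sum)
  also have "\<dots> = (\<Sum>i<n. \<Sum>j<n. (1 - r)\<^sup>2 * ((1 - 1 / real n)\<^sup>2 + 2 * (centering_weight n i j)\<^sup>2))"
  proof (intro sum.cong refl)
    fix i j assume "i \<in> {..<n}" "j \<in> {..<n}"
    then have ij: "i < n" "j < n" by auto
    show "(\<integral>\<omega>. ?W i \<omega> * ?W j \<omega> \<partial>M) = (1 - r)\<^sup>2 * ((1 - 1 / real n)\<^sup>2 + 2 * (centering_weight n i j)\<^sup>2)"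
      unfolding m22(2) bilin_form_equicorr_centering[OF ij] bilin_form_equicorr_centering[OF ij(1) ij(1)]
        bilin_form_equicorr_centering[OF ij(2) ij(2)]
      by (simp add: centering_weight_def[of n i i] centering_weight_def[of n j j] power_mult_distrib
          flip: distrib_left power2_eq_square)
        (simp add: distrib_left mult.left_commute)
  qed
  also have "\<dots> = (\<Sum>i<n. (1 - r)\<^sup>2 * (real n * (1 - 1 / real n)\<^sup>2 + 2 * (1 - 1 / real n)))"
    by (intro sum.cong refl)
      (simp add: sum.distrib sum_distrib_left[symmetric] sum_sq_centering_weight)
  also have "\<dots> = (1 - r)\<^sup>2 * ((real n - 1)\<^sup>2 + 2 * (real n - 1))"
    using assms by (simp add: power2_eq_square field_simps)
  finally show "(\<integral>\<omega>. (sum_sq_dev n (\<lambda>k. Z k \<omega>))\<^sup>2 \<partial>M) = (1 - r)\<^sup>2 * ((real n - 1)\<^sup>2 + 2 * (real n - 1))" .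
qed

lemma sum_sq_dev_mean_sq_error:
  assumes "0 < n"
  shows "integrable M (\<lambda>\<omega>. (sum_sq_dev n (\<lambda>k. Z k \<omega>) / real n - (1 - r))\<^sup>2)"
    and "(\<integral>\<omega>. (sum_sq_dev n (\<lambda>k. Z k \<omega>) / real n - (1 - r))\<^sup>2 \<partial>M) = (1 - r)\<^sup>2 * (2 * real n - 1) / (real n)\<^sup>2"
proof -
  note m1 = sum_sq_dev_first_moment[OF assms] and m2 = sum_sq_dev_second_moment[OF assms]
  have eq: "(sum_sq_dev n (\<lambda>k. Z k \<omega>) / real n - (1 - r))\<^sup>2 =
     (sum_sq_dev n (\<lambda>k. Z k \<omega>))\<^sup>2 / (real n)\<^sup>2 - (2 * (1 - r) / real n) * sum_sq_dev n (\<lambda>k. Z k \<omega>) + (1 - r)\<^sup>2" for \<omega>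
    using assms by (simp add: power2_eq_square field_simps)
  show "integrable M (\<lambda>\<omega>. (sum_sq_dev n (\<lambda>k. Z k \<omega>) / real n - (1 - r))\<^sup>2)"
    unfolding eq using m1(1) m2(1) by auto
  have "(\<integral>\<omega>. (sum_sq_dev n (\<lambda>k. Z k \<omega>) / real n - (1 - r))\<^sup>2 \<partial>M)
      = (1 - r)\<^sup>2 * ((real n - 1)\<^sup>2 + 2 * (real n - 1)) / (real n)\<^sup>2
        - (2 * (1 - r) / real n) * ((1 - r) * (real n - 1)) + (1 - r)\<^sup>2"
    unfolding eq using m1 m2 by (simp add: prob_space)
  also have "\<dots> = (1 - r)\<^sup>2 * (2 * real n - 1) / (real n)\<^sup>2"
    using assms by (simp add: power2_eq_square field_simps)
  finally show "(\<integral>\<omega>. (sum_sq_dev n (\<lambda>k. Z k \<omega>) / real n - (1 - r))\<^sup>2 \<partial>M) = (1 - r)\<^sup>2 * (2 * real n - 1) / (real n)\<^sup>2" .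
qed

end

lemma (in prob_space) integral_indep_var_iterated:
  fixes F :: "'b \<Rightarrow> 'b \<Rightarrow> 'd::{banach,second_countable_topology}"
  assumes indep: "indep_var MU U MV V"
    and F[measurable]: "(\<lambda>(u, v). F u v) \<in> borel_measurable (MU \<Otimes>\<^sub>M MV)"
    and bounded: "\<And>u v. norm (F u v) \<le> B"
  shows "(\<integral>\<omega>. F (U \<omega>) (V \<omega>) \<partial>M) = (\<integral>\<omega>. (\<integral>\<omega>'. F (U \<omega>') (V \<omega>) \<partial>M) \<partial>M)"
proof -
  have [measurable]: "random_variable MU U" "random_variable MV V"
    and joint: "distr M MU U \<Otimes>\<^sub>M distr M MV V = distr M (MU \<Otimes>\<^sub>M MV) (\<lambda>\<omega>. (U \<omega>, V \<omega>))"
    using indep unfolding indep_var_distribution_eq by auto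
  define PU where "PU = distr M MU U"
  define PV where "PV = distr M MV V"
  interpret PU: prob_space PU unfolding PU_def by (rule prob_space_distr) simp
  interpret PV: prob_space PV unfolding PV_def by (rule prob_space_distr) simp
  interpret PUV: pair_prob_space PU PV ..
  have [simp]: "sets PU = sets MU" "sets PV = sets MV" unfolding PU_def PV_def by auto
  have [measurable]: "(\<lambda>(u, v). F u v) \<in> borel_measurable (PU \<Otimes>\<^sub>M PV)"
    using F by (simp cong: measurable_cong_sets)
  have int: "integrable (PU \<Otimes>\<^sub>M PV) (\<lambda>(u, v). F u v)"
    by (rule PUV.integrable_const_bound[where B=B]) (auto simp: bounded split: prod.splits)
  have "(\<integral>\<omega>. F (U \<omega>) (V \<omega>) \<partial>M) = (\<integral>z. (\<lambda>(u, v). F u v) z \<partial>distr M (MU \<Otimes>\<^sub>M MV) (\<lambda>\<omega>. (U \<omega>, V \<omega>)))"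
    by (subst integral_distr) auto
  also have "\<dots> = (\<integral>z. (\<lambda>(u, v). F u v) z \<partial>(PU \<Otimes>\<^sub>M PV))"
    unfolding PU_def PV_def joint ..
  also have "\<dots> = (\<integral>v. (\<integral>u. F u v \<partial>PU) \<partial>PV)"
    by (rule PUV.integral_snd[symmetric]) (rule int)
  also have "\<dots> = (\<integral>v. (\<integral>\<omega>'. F (U \<omega>') v \<partial>M) \<partial>PV)"
    unfolding PU_def
    by (intro Bochner_Integration.integral_cong refl, subst integral_distr)
       (auto simp: PV_def measurable_Pair2[OF F[unfolded case_prod_beta']])
  also have "\<dots> = (\<integral>\<omega>. (\<integral>\<omega>'. F (U \<omega>') (V \<omega>) \<partial>M) \<partial>M)"
    unfolding PV_def by (subst integral_distr) auto
  finally show ?thesis .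
qed

lemma (in prob_space) nn_integral_indep_var_iterated:
  fixes F :: "'b \<Rightarrow> 'b \<Rightarrow> ennreal"
  assumes indep: "indep_var MU U MV V"
    and F[measurable]: "(\<lambda>(u, v). F u v) \<in> borel_measurable (MU \<Otimes>\<^sub>M MV)"
  shows "(\<integral>\<^sup>+\<omega>. F (U \<omega>) (V \<omega>) \<partial>M) = (\<integral>\<^sup>+\<omega>. (\<integral>\<^sup>+\<omega>'. F (U \<omega>') (V \<omega>) \<partial>M) \<partial>M)"
proof -
  have [measurable]: "random_variable MU U" "random_variable MV V"
    and joint: "distr M MU U \<Otimes>\<^sub>M distr M MV V = distr M (MU \<Otimes>\<^sub>M MV) (\<lambda>\<omega>. (U \<omega>, V \<omega>))"
    using indep unfolding indep_var_distribution_eq by auto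
  define PU where "PU = distr M MU U"
  define PV where "PV = distr M MV V"
  interpret PU: prob_space PU unfolding PU_def by (rule prob_space_distr) simp
  interpret PV: prob_space PV unfolding PV_def by (rule prob_space_distr) simp
  interpret PUV: pair_sigma_finite PU PV ..
  have [simp]: "sets PU = sets MU" "sets PV = sets MV" unfolding PU_def PV_def by auto
  have [measurable]: "(\<lambda>(u, v). F u v) \<in> borel_measurable (PU \<Otimes>\<^sub>M PV)"
    using F by (simp cong: measurable_cong_sets)
  have "(\<integral>\<^sup>+\<omega>. F (U \<omega>) (V \<omega>) \<partial>M) = (\<integral>\<^sup>+z. (\<lambda>(u, v). F u v) z \<partial>distr M (MU \<Otimes>\<^sub>M MV) (\<lambda>\<omega>. (U \<omega>, V \<omega>)))"
    by (subst nn_integral_distr) auto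
  also have "\<dots> = (\<integral>\<^sup>+z. (\<lambda>(u, v). F u v) z \<partial>(PU \<Otimes>\<^sub>M PV))"
    unfolding PU_def PV_def joint ..
  also have "\<dots> = (\<integral>\<^sup>+v. (\<integral>\<^sup>+u. F u v \<partial>PU) \<partial>PV)"
    using PUV.nn_integral_snd[of "\<lambda>(u, v). F u v"] by simp
  also have "\<dots> = (\<integral>\<^sup>+v. (\<integral>\<^sup>+\<omega>'. F (U \<omega>') v \<partial>M) \<partial>PV)"
    unfolding PU_def
    by (intro nn_integral_cong, subst nn_integral_distr)
       (auto simp: PV_def measurable_Pair2[OF F[unfolded case_prod_beta']])
  also have "\<dots> = (\<integral>\<^sup>+\<omega>. (\<integral>\<^sup>+\<omega>'. F (U \<omega>') (V \<omega>) \<partial>M) \<partial>M)"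
    unfolding PV_def by (subst nn_integral_distr) auto
  finally show ?thesis .
qed

definition scaled_deviation :: "nat \<Rightarrow> (nat \<Rightarrow> real) \<Rightarrow> nat \<Rightarrow> real" where
  "scaled_deviation n y i = (y i - sample_mean n y) / sqrt (real n)"

lemma sample_mean_cong: "(\<And>i. i < n \<Longrightarrow> x i = x' i) \<Longrightarrow> sample_mean n x = sample_mean n x'"
  unfolding sample_mean_def by (intro arg_cong2[where f="(/)"] sum.cong) auto

lemma sum_deviation_eq_0: "(\<Sum>i<n. y i - sample_mean n y) = 0"
  by (cases "n = 0") (auto simp: sample_mean_def sum_subtractf)

lemma quad_form_equicorr_scaled_deviation:
  "quad_form n (equicorr r) (scaled_deviation n y) = (1 - r) * sum_sq_dev n y / real n"
proof -
  have "(\<Sum>i<n. scaled_deviation n y i) = 0"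
    unfolding scaled_deviation_def using sum_deviation_eq_0[where n=n and y=y] by (simp flip: sum_divide_distrib)
  then show ?thesis
    unfolding bilin_form_equicorr sum_sq_dev_def scaled_deviation_def
    by (simp add: power2_eq_square[symmetric] power_divide flip: sum_divide_distrib)
qed

text \<open>Centering one factor suffices, because the deviations of \<open>y\<close> sum to zero.\<close>
lemma sqrt_mult_sample_cov:
  "sqrt (real n) * sample_cov n x y = (\<Sum>i<n. scaled_deviation n y i * x i)"
proof -
  have "(\<Sum>i<n. (x i - sample_mean n x) * (y i - sample_mean n y))
      = (\<Sum>i<n. x i * (y i - sample_mean n y)) - sample_mean n x * (\<Sum>i<n. y i - sample_mean n y)"
    unfolding sum_distrib_left sum_subtractf[symmetric] by (intro sum.cong refl) (simp add: algebra_simps)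
  then have dev: "(\<Sum>i<n. (x i - sample_mean n x) * (y i - sample_mean n y)) = (\<Sum>i<n. x i * (y i - sample_mean n y))"
    by (simp add: sum_deviation_eq_0)
  have s: "sqrt (real n) / real n = 1 / sqrt (real n)"
    by (cases "n = 0") (auto simp: field_simps real_sqrt_divide[symmetric] real_div_sqrt)
  have "sqrt (real n) * sample_cov n x y = (sqrt (real n) / real n) * (\<Sum>i<n. x i * (y i - sample_mean n y))"
    unfolding sample_cov_def dev by simp
  also have "\<dots> = (\<Sum>i<n. scaled_deviation n y i * x i)"
    unfolding s scaled_deviation_def by (simp add: sum_divide_distrib ac_simps)
  finally show ?thesis .
qed

lemma measurable_scaled_deviation[measurable]:
  "i < n \<Longrightarrow> (\<lambda>y. scaled_deviation n y i) \<in> borel_measurable (PiM {..<n} (\<lambda>_. borel))"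
  unfolding scaled_deviation_def sample_mean_def by measurable

lemma scaled_deviation_restrict:
  "i < n \<Longrightarrow> scaled_deviation n (restrict y {..<n}) i = scaled_deviation n y i"
  unfolding scaled_deviation_def by (simp add: sample_mean_cong[of n "restrict y {..<n}" y])

lemma linear_form_scaled_deviation_restrict:
  "(\<Sum>i<n. scaled_deviation n (restrict y {..<n}) i * restrict x {..<n} i) = (\<Sum>i<n. scaled_deviation n y i * x i)"
  by (intro sum.cong refl) (simp add: scaled_deviation_restrict)

lemma abs_exp_neg_diff_le:
  fixes x y :: real
  assumes "0 \<le> x" "0 \<le> y"
  shows "\<bar>exp (- x) - exp (- y)\<bar> \<le> \<bar>x - y\<bar>"
proof -
  have *: "exp (- a) - exp (- b) \<le> b - a" if "0 \<le> a" "a \<le> b" for a b :: real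
  proof -
    have "exp (- a) - exp (- b) = exp (- a) * (1 - exp (- (b - a)))"
      by (simp add: algebra_simps flip: exp_add)
    also have "\<dots> \<le> 1 * (b - a)"
    proof (rule mult_mono)
      show "1 - exp (- (b - a)) \<le> b - a"
        using exp_ge_add_one_self[of "- (b - a)"] by linarith
    qed (use that in auto)
    finally show ?thesis by simp
  qed
  show ?thesis
    using *[of x y] *[of y x] assms by (cases "x \<le> y") (auto simp: abs_le_iff)
qed

lemma norm_iexp_diff_le: "norm (iexp u - iexp v) \<le> \<bar>u - v\<bar>"
proof -
  have "iexp u - iexp v = iexp v * (iexp (u - v) - 1)"
    by (simp add: algebra_simps flip: exp_add)
  then have "norm (iexp u - iexp v) = norm (iexp (u - v) - 1)"
    by (simp add: norm_mult norm_exp_i_times)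
  also have "\<dots> \<le> \<bar>u - v\<bar>"
    using iexp_approx1[of "u - v" 0] by simp
  finally show ?thesis .
qed

lemma abs_le_add_sq_div:
  fixes z d :: real
  assumes "0 < d"
  shows "\<bar>z\<bar> \<le> d + z\<^sup>2 / d"
proof (cases "\<bar>z\<bar> \<le> d")
  case True
  then show ?thesis using assms by (simp add: add_increasing2)
next
  case False
  then have "\<bar>z\<bar> * d \<le> \<bar>z\<bar> * \<bar>z\<bar>" by (intro mult_left_mono) auto
  then have "\<bar>z\<bar> \<le> z\<^sup>2 / d" using assms by (simp add: field_simps power2_eq_square abs_mult_self_eq)
  then show ?thesis using assms by simp
qed

lemma abs_inverse_sqrt_mult_diff_le:
  fixes a b c d :: real
  assumes "\<bar>a - c\<bar> \<le> d" "\<bar>b - c\<bar> \<le> d" and "0 < d" "d \<le> c / 2"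
  shows "\<bar>1 / sqrt (a * b) - 1 / c\<bar> \<le> 2 * d / c\<^sup>2"
proof -
  have "(c - d)\<^sup>2 \<le> a * b"
    using assms mult_mono[of "c - d" a "c - d" b] by (simp add: power2_eq_square)
  then have lo: "c - d \<le> sqrt (a * b)"
    using assms real_le_rsqrt by auto
  have "a * b \<le> (c + d)\<^sup>2"
    using assms mult_mono[of a "c + d" b "c + d"] by (simp add: power2_eq_square)
  then have hi: "sqrt (a * b) \<le> c + d"
    using assms real_sqrt_le_mono[of "a * b" "(c + d)\<^sup>2"] by simp
  define w where "w = sqrt (a * b)"
  have w: "c / 2 \<le> w" "\<bar>c - w\<bar> \<le> d"
    using lo hi assms unfolding w_def by auto
  have "\<bar>1 / w - 1 / c\<bar> = \<bar>c - w\<bar> / (w * c)"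
    using w assms by (simp add: field_simps abs_div)
  also have "\<dots> \<le> d / ((c / 2) * c)"
    using w assms by (intro frac_le mult_right_mono) auto
  also have "\<dots> = 2 * d / c\<^sup>2"
    by (simp add: power2_eq_square)
  finally show ?thesis unfolding w_def .
qed

text \<open>Where \<open>a\<close> and \<open>b\<close> are within \<open>d\<close> of \<open>c\<close> this is \<open>abs_inverse_sqrt_mult_diff_le\<close>;
  elsewhere the trivial bound 2 is dominated by the second term.\<close>
lemma norm_iexp_ratio_diff_le:
  fixes a b c d t A :: real
  assumes "0 < d" "d \<le> c / 2"
  shows "norm (iexp (t * (A / sqrt (a * b))) - iexp (t * (A / c)))
           \<le> \<bar>t\<bar> * (2 * d / c\<^sup>2) * (1 + A\<^sup>2) + 2 * ((a - c)\<^sup>2 + (b - c)\<^sup>2) / d\<^sup>2"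
proof (cases "\<bar>a - c\<bar> \<le> d \<and> \<bar>b - c\<bar> \<le> d")
  case True
  have "norm (iexp (t * (A / sqrt (a * b))) - iexp (t * (A / c))) \<le> \<bar>t * A * (1 / sqrt (a * b) - 1 / c)\<bar>"
    using norm_iexp_diff_le[of "t * (A / sqrt (a * b))" "t * (A / c)"] by (simp add: algebra_simps)
  also have "\<dots> = \<bar>t\<bar> * \<bar>A\<bar> * \<bar>1 / sqrt (a * b) - 1 / c\<bar>"
    by (simp add: abs_mult)
  also have "\<dots> \<le> \<bar>t\<bar> * (1 + A\<^sup>2) * (2 * d / c\<^sup>2)"
    using abs_le_add_sq_div[of 1 A] abs_inverse_sqrt_mult_diff_le[of a c d b] True assms
    by (intro mult_mono mult_left_mono) auto
  also have "\<dots> \<le> \<bar>t\<bar> * (2 * d / c\<^sup>2) * (1 + A\<^sup>2) + 2 * ((a - c)\<^sup>2 + (b - c)\<^sup>2) / d\<^sup>2"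
    by (simp add: ac_simps)
  finally show ?thesis .
next
  case False
  then have "d\<^sup>2 \<le> (a - c)\<^sup>2 + (b - c)\<^sup>2"
    using abs_le_square_iff[of d "a - c"] abs_le_square_iff[of d "b - c"] assms
    by (auto intro: add_increasing add_increasing2)
  then have "2 \<le> 2 * ((a - c)\<^sup>2 + (b - c)\<^sup>2) / d\<^sup>2"
    using assms by (simp add: field_simps)
  moreover have "0 \<le> \<bar>t\<bar> * (2 * d / c\<^sup>2) * (1 + A\<^sup>2)"
    using assms by simp
  moreover have "norm (iexp (t * (A / sqrt (a * b))) - iexp (t * (A / c))) \<le> 2"
    using norm_triangle_ineq4[of "iexp (t * (A / sqrt (a * b)))" "iexp (t * (A / c))"]
    by (simp add: norm_exp_i_times)
  ultimately show ?thesis by linarith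
qed

context prob_space
begin

lemma abs_expectation_exp_neg_diff_le:
  fixes b :: "'a \<Rightarrow> real"
  assumes [measurable]: "b \<in> borel_measurable M"
    and b: "\<And>\<omega>. 0 \<le> b \<omega>" and "0 \<le> c" "0 \<le> \<beta>" "0 < d"
    and int: "integrable M (\<lambda>\<omega>. (b \<omega> - c)\<^sup>2)"
  shows "\<bar>(\<integral>\<omega>. exp (- (\<beta> * b \<omega>)) \<partial>M) - exp (- (\<beta> * c))\<bar>
           \<le> \<beta> * (d + (\<integral>\<omega>. (b \<omega> - c)\<^sup>2 \<partial>M) / d)"
proof -
  have ie: "integrable M (\<lambda>\<omega>. exp (- (\<beta> * b \<omega>)))"
    using b \<open>0 \<le> \<beta>\<close> by (intro integrable_const_bound[where B=1] AE_I2) auto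
  have "\<bar>(\<integral>\<omega>. exp (- (\<beta> * b \<omega>)) \<partial>M) - exp (- (\<beta> * c))\<bar>
      = \<bar>\<integral>\<omega>. exp (- (\<beta> * b \<omega>)) - exp (- (\<beta> * c)) \<partial>M\<bar>"
    using ie by (simp add: prob_space)
  also have "\<dots> \<le> (\<integral>\<omega>. \<bar>exp (- (\<beta> * b \<omega>)) - exp (- (\<beta> * c))\<bar> \<partial>M)"
    by (rule integral_abs_bound)
  also have "\<dots> \<le> (\<integral>\<omega>. \<beta> * (d + (b \<omega> - c)\<^sup>2 / d) \<partial>M)"
  proof (rule integral_mono)
    show "integrable M (\<lambda>\<omega>. \<bar>exp (- (\<beta> * b \<omega>)) - exp (- (\<beta> * c))\<bar>)"
      using ie by auto
    show "integrable M (\<lambda>\<omega>. \<beta> * (d + (b \<omega> - c)\<^sup>2 / d))"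
      using int by auto
    fix \<omega>
    have "\<bar>exp (- (\<beta> * b \<omega>)) - exp (- (\<beta> * c))\<bar> \<le> \<beta> * \<bar>b \<omega> - c\<bar>"
      using abs_exp_neg_diff_le[of "\<beta> * b \<omega>" "\<beta> * c"] assms
      by (simp add: abs_mult flip: right_diff_distrib)
    also have "\<dots> \<le> \<beta> * (d + (b \<omega> - c)\<^sup>2 / d)"
      using assms by (intro mult_left_mono abs_le_add_sq_div) auto
    finally show "\<bar>exp (- (\<beta> * b \<omega>)) - exp (- (\<beta> * c))\<bar> \<le> \<beta> * (d + (b \<omega> - c)\<^sup>2 / d)" .
  qed
  also have "\<dots> = \<beta> * (d + (\<integral>\<omega>. (b \<omega> - c)\<^sup>2 \<partial>M) / d)"
    using int by (simp add: prob_space)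
  finally show ?thesis .
qed

lemma norm_expectation_iexp_ratio_diff_le:
  assumes [measurable]: "A \<in> borel_measurable M" "a \<in> borel_measurable M" "b \<in> borel_measurable M"
    and "0 < d" "d \<le> c / 2"
    and intA: "integrable M (\<lambda>\<omega>. (A \<omega>)\<^sup>2)"
    and inta: "integrable M (\<lambda>\<omega>. (a \<omega> - c)\<^sup>2)" and intb: "integrable M (\<lambda>\<omega>. (b \<omega> - c)\<^sup>2)"
  shows "norm ((\<integral>\<omega>. iexp (t * (A \<omega> / sqrt (a \<omega> * b \<omega>))) \<partial>M) - (\<integral>\<omega>. iexp (t * (A \<omega> / c)) \<partial>M))
    \<le> \<bar>t\<bar> * (2 * d / c\<^sup>2) * (1 + (\<integral>\<omega>. (A \<omega>)\<^sup>2 \<partial>M))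
       + 2 * ((\<integral>\<omega>. (a \<omega> - c)\<^sup>2 \<partial>M) + (\<integral>\<omega>. (b \<omega> - c)\<^sup>2 \<partial>M)) / d\<^sup>2"
proof -
  have i1: "integrable M (\<lambda>\<omega>. iexp (t * (A \<omega> / sqrt (a \<omega> * b \<omega>))))"
    and i2: "integrable M (\<lambda>\<omega>. iexp (t * (A \<omega> / c)))"
    by (auto intro!: integrable_const_bound[where B=1] simp: norm_exp_i_times)
  have "norm ((\<integral>\<omega>. iexp (t * (A \<omega> / sqrt (a \<omega> * b \<omega>))) \<partial>M) - (\<integral>\<omega>. iexp (t * (A \<omega> / c)) \<partial>M))
      \<le> (\<integral>\<omega>. norm (iexp (t * (A \<omega> / sqrt (a \<omega> * b \<omega>))) - iexp (t * (A \<omega> / c))) \<partial>M)"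
    using i1 i2 integral_norm_bound[of M "\<lambda>\<omega>. iexp (t * (A \<omega> / sqrt (a \<omega> * b \<omega>))) - iexp (t * (A \<omega> / c))"]
    by simp
  also have "\<dots> \<le> (\<integral>\<omega>. \<bar>t\<bar> * (2 * d / c\<^sup>2) * (1 + (A \<omega>)\<^sup>2) + 2 * ((a \<omega> - c)\<^sup>2 + (b \<omega> - c)\<^sup>2) / d\<^sup>2 \<partial>M)"
    using i1 i2 intA inta intb assms(4,5)
    by (intro integral_mono norm_iexp_ratio_diff_le) auto
  also have "\<dots> = \<bar>t\<bar> * (2 * d / c\<^sup>2) * (1 + (\<integral>\<omega>. (A \<omega>)\<^sup>2 \<partial>M))
       + 2 * ((\<integral>\<omega>. (a \<omega> - c)\<^sup>2 \<partial>M) + (\<integral>\<omega>. (b \<omega> - c)\<^sup>2 \<partial>M)) / d\<^sup>2"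
    using intA inta intb by (simp add: prob_space)
  finally show ?thesis .
qed

end

lemma sqrt_mult_sample_corr:
  assumes "0 < n"
  shows "sqrt (real n) * sample_corr n x y
           = sqrt (real n) * sample_cov n x y / sqrt (sum_sq_dev n x / real n * (sum_sq_dev n y / real n))"
proof -
  have "sqrt (sum_sq_dev n x / real n * (sum_sq_dev n y / real n)) = sqrt (sum_sq_dev n x) * sqrt (sum_sq_dev n y) / real n"
    using assms by (simp add: real_sqrt_mult real_sqrt_divide)
  then show ?thesis
    unfolding sample_corr_def sample_cov_def sum_sq_dev_def
    using assms by (cases "sqrt (sum_sq_dev n x) * sqrt (sum_sq_dev n y) = 0") (auto simp: field_simps sum_sq_dev_def)
qed

lemma sqrt_mult_mean_sq_error_le:
  assumes "0 < n"
  shows "sqrt (real n) * (c\<^sup>2 * (2 * real n - 1) / (real n)\<^sup>2) \<le> 2 * c\<^sup>2 / sqrt (real n)"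
proof -
  have "sqrt (real n) * ((2 * real n - 1) / (real n)\<^sup>2) \<le> sqrt (real n) * (2 * real n / (real n)\<^sup>2)"
    using assms by (intro mult_left_mono divide_right_mono) auto
  also have "\<dots> = 2 / sqrt (real n)"
    using assms by (simp add: power2_eq_square field_simps flip: real_sqrt_mult)
  finally have "c\<^sup>2 * (sqrt (real n) * ((2 * real n - 1) / (real n)\<^sup>2)) \<le> c\<^sup>2 * (2 / sqrt (real n))"
    by (rule mult_left_mono) simp
  then show ?thesis
    by (simp add: algebra_simps)
qed

lemma fourth_root_error_terms_le:
  fixes c s t :: real
  assumes c: "0 < c" "c\<^sup>2 \<le> 1" and s: "1 \<le> s" "s\<^sup>2 * s\<^sup>2 = real n"
  shows "\<bar>t\<bar> * (2 * (c / (2 * s)) / c\<^sup>2) * (1 + c\<^sup>2)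
           + 4 * (c\<^sup>2 * (2 * real n - 1) / (real n)\<^sup>2) / (c / (2 * s))\<^sup>2
         \<le> 2 * \<bar>t\<bar> / (c * s) + 32 / s"
    and "(t / c)\<^sup>2 * c * (1 + 2 * c\<^sup>2) / 2 / s\<^sup>2 \<le> 2 * t\<^sup>2 / (c * s)"
proof -
  have n: "0 < real n"
    using s mult_mono[of 1 "s\<^sup>2" 1 "s\<^sup>2"] by (auto simp: one_le_power)
  have "\<bar>t\<bar> * (2 * (c / (2 * s)) / c\<^sup>2) * (1 + c\<^sup>2) = \<bar>t\<bar> * (1 + c\<^sup>2) / (c * s)"
    using c s(1) by (simp add: power2_eq_square field_simps)
  also have "\<dots> \<le> 2 * \<bar>t\<bar> / (c * s)"
    using c s(1) mult_left_mono[of "1 + c\<^sup>2" 2 "\<bar>t\<bar>"] by (intro divide_right_mono) (auto simp: ac_simps)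
  finally have e1: "\<bar>t\<bar> * (2 * (c / (2 * s)) / c\<^sup>2) * (1 + c\<^sup>2) \<le> 2 * \<bar>t\<bar> / (c * s)" .
  have "4 * (c\<^sup>2 * (2 * real n - 1) / (real n)\<^sup>2) / (c / (2 * s))\<^sup>2 \<le> 16 * s\<^sup>2 * (2 / real n)"
    using c s(1) n by (simp add: power2_eq_square field_simps)
  also have "\<dots> = 32 / s\<^sup>2"
    using s by (simp add: field_simps flip: s(2))
  also have "\<dots> \<le> 32 / s"
    using s(1) by (intro divide_left_mono) (auto simp: power2_eq_square)
  finally show "\<bar>t\<bar> * (2 * (c / (2 * s)) / c\<^sup>2) * (1 + c\<^sup>2)
      + 4 * (c\<^sup>2 * (2 * real n - 1) / (real n)\<^sup>2) / (c / (2 * s))\<^sup>2 \<le> 2 * \<bar>t\<bar> / (c * s) + 32 / s"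
    using e1 by linarith
  have "(t / c)\<^sup>2 * c * (1 + 2 * c\<^sup>2) / 2 / s\<^sup>2 \<le> (t / c)\<^sup>2 * c * 4 / (2 * s)"
    using c s(1) mult_left_mono[of 1 s s] by (simp only: divide_divide_eq_left, intro frac_le mult_left_mono)
      (auto simp: power2_eq_square)
  also have "\<dots> = 2 * t\<^sup>2 / (c * s)"
    using c by (simp add: power_divide power2_eq_square field_simps)
  finally show "(t / c)\<^sup>2 * c * (1 + 2 * c\<^sup>2) / 2 / s\<^sup>2 \<le> 2 * t\<^sup>2 / (c * s)" .
qed

locale indep_equicorr_pair = prob_space M for M :: "'a measure" +
  fixes n :: nat and r :: real and X Y :: "nat \<Rightarrow> 'a \<Rightarrow> real"
  assumes X_gaussian: "is_mvn0 M n (equicorr r) X"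
    and Y_gaussian: "is_mvn0 M n (equicorr r) Y"
    and r_pos: "0 < r" and r_less_1: "r < 1"
    and indep: "indep_var (PiM {..<n} (\<lambda>_. borel)) (\<lambda>\<omega>. \<lambda>i\<in>{..<n}. X i \<omega>)
                          (PiM {..<n} (\<lambda>_. borel)) (\<lambda>\<omega>. \<lambda>i\<in>{..<n}. Y i \<omega>)"

sublocale indep_equicorr_pair \<subseteq> X: equicorr_gaussian M n r X
  using X_gaussian r_pos r_less_1 by unfold_locales auto

sublocale indep_equicorr_pair \<subseteq> Y: equicorr_gaussian M n r Y
  using Y_gaussian r_pos r_less_1 by unfold_locales auto

context indep_equicorr_pair
begin

abbreviation cov_stat :: "'a \<Rightarrow> real" where
  "cov_stat \<omega> \<equiv> sqrt (real n) * sample_cov n (\<lambda>i. X i \<omega>) (\<lambda>i. Y i \<omega>)"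

abbreviation corr_stat :: "'a \<Rightarrow> real" where
  "corr_stat \<omega> \<equiv> sqrt (real n) * sample_corr n (\<lambda>i. X i \<omega>) (\<lambda>i. Y i \<omega>)"

lemma cov_stat_measurable[measurable]: "cov_stat \<in> borel_measurable M"
  unfolding sample_cov_def sample_mean_def by measurable

lemma corr_stat_measurable[measurable]: "corr_stat \<in> borel_measurable M"
  unfolding sample_corr_def sample_mean_def by measurable

lemma char_cov_stat:
  "char (distr M borel cov_stat) t
     = (\<integral>\<omega>. complex_of_real (exp (- (t\<^sup>2 * ((1 - r) * sum_sq_dev n (\<lambda>i. Y i \<omega>) / real n)) / 2)) \<partial>M)"
proof -
  let ?F = "\<lambda>x y. iexp (t * (\<Sum>i<n. scaled_deviation n y i * x i))"
  have "char (distr M borel cov_stat) t = (\<integral>\<omega>. ?F (\<lambda>i\<in>{..<n}. X i \<omega>) (\<lambda>i\<in>{..<n}. Y i \<omega>) \<partial>M)"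
    unfolding char_def sqrt_mult_sample_cov linear_form_scaled_deviation_restrict
    by (subst integral_distr) (auto simp: sqrt_mult_sample_cov[symmetric])
  also have "\<dots> = (\<integral>\<omega>. (\<integral>\<omega>'. ?F (\<lambda>i\<in>{..<n}. X i \<omega>') (\<lambda>i\<in>{..<n}. Y i \<omega>) \<partial>M) \<partial>M)"
    by (rule integral_indep_var_iterated[OF indep, where B=1]) measurable
  also have "\<dots> = (\<integral>\<omega>. complex_of_real (exp (- (t\<^sup>2 * ((1 - r) * sum_sq_dev n (\<lambda>i. Y i \<omega>) / real n)) / 2)) \<partial>M)"
    by (simp only: linear_form_scaled_deviation_restrict X.char_linear_form quad_form_equicorr_scaled_deviation)
  finally show ?thesis .
qed

lemma cov_stat_second_moment:
  assumes "0 < n"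
  shows "integrable M (\<lambda>\<omega>. (cov_stat \<omega>)\<^sup>2)"
    and "(\<integral>\<omega>. (cov_stat \<omega>)\<^sup>2 \<partial>M) = (1 - r)\<^sup>2 * (real n - 1) / real n"
proof -
  let ?F = "\<lambda>x y. ennreal ((\<Sum>i<n. scaled_deviation n y i * x i)\<^sup>2)"
  note Y1 = Y.sum_sq_dev_first_moment[OF assms]
  have "(\<integral>\<^sup>+\<omega>. ennreal ((cov_stat \<omega>)\<^sup>2) \<partial>M) = (\<integral>\<^sup>+\<omega>. ?F (\<lambda>i\<in>{..<n}. X i \<omega>) (\<lambda>i\<in>{..<n}. Y i \<omega>) \<partial>M)"
    unfolding sqrt_mult_sample_cov linear_form_scaled_deviation_restrict ..
  also have "\<dots> = (\<integral>\<^sup>+\<omega>. (\<integral>\<^sup>+\<omega>'. ?F (\<lambda>i\<in>{..<n}. X i \<omega>') (\<lambda>i\<in>{..<n}. Y i \<omega>) \<partial>M) \<partial>M)"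
    by (rule nn_integral_indep_var_iterated[OF indep]) measurable
  also have "\<dots> = (\<integral>\<^sup>+\<omega>. ennreal ((1 - r) * sum_sq_dev n (\<lambda>i. Y i \<omega>) / real n) \<partial>M)"
    by (simp only: linear_form_scaled_deviation_restrict X.nn_integral_linear_form_sq
        quad_form_equicorr_scaled_deviation)
  also have "\<dots> = ennreal (\<integral>\<omega>. (1 - r) * sum_sq_dev n (\<lambda>i. Y i \<omega>) / real n \<partial>M)"
    using Y1 r_less_1 by (intro nn_integral_eq_integral) (auto simp: sum_sq_dev_nonneg)
  also have "\<dots> = ennreal ((1 - r)\<^sup>2 * (real n - 1) / real n)"
    using Y1 by (simp add: power2_eq_square mult.assoc)
  finally have nn: "(\<integral>\<^sup>+\<omega>. ennreal ((cov_stat \<omega>)\<^sup>2) \<partial>M) = ennreal ((1 - r)\<^sup>2 * (real n - 1) / real n)" .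
  show int: "integrable M (\<lambda>\<omega>. (cov_stat \<omega>)\<^sup>2)"
    by (rule integrableI_bounded) (auto simp: nn)
  show "(\<integral>\<omega>. (cov_stat \<omega>)\<^sup>2 \<partial>M) = (1 - r)\<^sup>2 * (real n - 1) / real n"
    using nn int assms by (subst (asm) nn_integral_eq_integral) auto
qed

lemma norm_char_cov_stat_le:
  assumes "0 < n"
  shows "norm (char (distr M borel cov_stat) t - complex_of_real (exp (- (t\<^sup>2 * (1 - r)\<^sup>2) / 2)))
           \<le> t\<^sup>2 * (1 - r) * (1 + 2 * (1 - r)\<^sup>2) / 2 / sqrt (real n)"
proof -
  define c where "c = 1 - r"
  define \<beta> where "\<beta> = t\<^sup>2 * c / 2"
  define b where "b \<omega> = sum_sq_dev n (\<lambda>i. Y i \<omega>) / real n" for \<omega>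
  have [measurable]: "b \<in> borel_measurable M"
    unfolding b_def by measurable
  have c: "0 < c" "0 \<le> \<beta>"
    using r_less_1 by (simp_all add: c_def \<beta>_def)
  note mse = Y.sum_sq_dev_mean_sq_error[OF assms, folded b_def c_def]
  have "char (distr M borel cov_stat) t = complex_of_real (\<integral>\<omega>. exp (- (\<beta> * b \<omega>)) \<partial>M)"
    unfolding char_cov_stat by (simp add: \<beta>_def b_def c_def field_simps)
  moreover have "exp (- (t\<^sup>2 * (1 - r)\<^sup>2) / 2) = exp (- (\<beta> * c))"
    by (simp add: \<beta>_def c_def power2_eq_square field_simps)
  ultimately have "norm (char (distr M borel cov_stat) t - complex_of_real (exp (- (t\<^sup>2 * (1 - r)\<^sup>2) / 2)))
      = \<bar>(\<integral>\<omega>. exp (- (\<beta> * b \<omega>)) \<partial>M) - exp (- (\<beta> * c))\<bar>"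
    by (simp flip: of_real_diff)
  also have "\<dots> \<le> \<beta> * (1 / sqrt (real n) + (\<integral>\<omega>. (b \<omega> - c)\<^sup>2 \<partial>M) / (1 / sqrt (real n)))"
    using c mse(1) assms by (intro abs_expectation_exp_neg_diff_le) (auto simp: b_def sum_sq_dev_nonneg)
  also have "\<dots> = \<beta> * (1 / sqrt (real n) + sqrt (real n) * (c\<^sup>2 * (2 * real n - 1) / (real n)\<^sup>2))"
    by (simp add: mse(2))
  also have "\<dots> \<le> \<beta> * (1 / sqrt (real n) + 2 * c\<^sup>2 / sqrt (real n))"
    using c sqrt_mult_mean_sq_error_le[OF assms] by (intro mult_left_mono add_left_mono)
  also have "\<dots> = t\<^sup>2 * (1 - r) * (1 + 2 * (1 - r)\<^sup>2) / 2 / sqrt (real n)"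
    using assms by (simp add: \<beta>_def c_def field_simps)
  finally show ?thesis .
qed

lemma norm_char_corr_stat_cov_stat_le:
  assumes "0 < n" "0 < d" "d \<le> (1 - r) / 2"
  shows "norm (char (distr M borel corr_stat) t - char (distr M borel cov_stat) (t / (1 - r)))
           \<le> \<bar>t\<bar> * (2 * d / (1 - r)\<^sup>2) * (1 + (1 - r)\<^sup>2) + 4 * ((1 - r)\<^sup>2 * (2 * real n - 1) / (real n)\<^sup>2) / d\<^sup>2"
proof -
  define c where "c = 1 - r"
  define a where "a \<omega> = sum_sq_dev n (\<lambda>i. X i \<omega>) / real n" for \<omega>
  define b where "b \<omega> = sum_sq_dev n (\<lambda>i. Y i \<omega>) / real n" for \<omega>
  have [measurable]: "a \<in> borel_measurable M" "b \<in> borel_measurable M"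
    unfolding a_def b_def by measurable
  note A2 = cov_stat_second_moment[OF assms(1), folded c_def]
    and a2 = X.sum_sq_dev_mean_sq_error[OF assms(1), folded a_def c_def]
    and b2 = Y.sum_sq_dev_mean_sq_error[OF assms(1), folded b_def c_def]
  have "(\<integral>\<omega>. (cov_stat \<omega>)\<^sup>2 \<partial>M) \<le> c\<^sup>2"
    unfolding A2(2) using assms(1) by (simp add: field_simps)
  have corr: "char (distr M borel corr_stat) t = (\<integral>\<omega>. iexp (t * (cov_stat \<omega> / sqrt (a \<omega> * b \<omega>))) \<partial>M)"
    unfolding char_def a_def b_def sqrt_mult_sample_corr[OF assms(1)] by (subst integral_distr) simp_all
  have cov: "char (distr M borel cov_stat) (t / c) = (\<integral>\<omega>. iexp (t * (cov_stat \<omega> / c)) \<partial>M)"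
    unfolding char_def by (subst integral_distr) simp_all
  have "norm (char (distr M borel corr_stat) t - char (distr M borel cov_stat) (t / c))
      \<le> \<bar>t\<bar> * (2 * d / c\<^sup>2) * (1 + (\<integral>\<omega>. (cov_stat \<omega>)\<^sup>2 \<partial>M))
         + 2 * ((\<integral>\<omega>. (a \<omega> - c)\<^sup>2 \<partial>M) + (\<integral>\<omega>. (b \<omega> - c)\<^sup>2 \<partial>M)) / d\<^sup>2"
    unfolding corr cov
    by (rule norm_expectation_iexp_ratio_diff_le) (use A2(1) a2(1) b2(1) assms(2,3) in \<open>simp_all add: c_def\<close>)
  also have "\<dots> \<le> \<bar>t\<bar> * (2 * d / c\<^sup>2) * (1 + c\<^sup>2) + 4 * (c\<^sup>2 * (2 * real n - 1) / (real n)\<^sup>2) / d\<^sup>2"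
    unfolding a2(2) b2(2) using \<open>(\<integral>\<omega>. (cov_stat \<omega>)\<^sup>2 \<partial>M) \<le> c\<^sup>2\<close> assms(2)
    by (intro add_mono mult_left_mono) auto
  finally show ?thesis unfolding c_def .
qed

text \<open>Compare with the covariance statistic at frequency \<open>t / (1 - r)\<close>; choosing \<open>d\<close> of order
  \<open>n powr (-1/4)\<close> balances the two error terms.\<close>
lemma norm_char_corr_stat_le:
  assumes "0 < n"
  shows "norm (char (distr M borel corr_stat) t - complex_of_real (exp (- t\<^sup>2 / 2)))
           \<le> (32 + 2 * (\<bar>t\<bar> + t\<^sup>2) / (1 - r)) / sqrt (sqrt (real n))"
proof -
  define c where "c = 1 - r"
  define s where "s = sqrt (sqrt (real n))"
  define d where "d = c / (2 * s)"
  have c: "0 < c" "c\<^sup>2 \<le> 1"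
    using r_pos r_less_1 by (auto simp: c_def power_le_one)
  have s: "1 \<le> s" "s\<^sup>2 = sqrt (real n)" "s\<^sup>2 * s\<^sup>2 = real n"
    using assms by (auto simp: s_def)
  have "c / (2 * s) \<le> c / 2"
    using c s(1) by (intro divide_left_mono) auto
  then have d: "0 < d" "d \<le> (1 - r) / 2"
    using c s(1) by (auto simp: d_def c_def)
  note error_terms = fourth_root_error_terms_le[OF c s(1) s(3), of t]
  have "exp (- ((t / c)\<^sup>2 * c\<^sup>2) / 2) = exp (- t\<^sup>2 / 2)"
    using c by (simp add: power_divide)
  then have cov: "norm (char (distr M borel cov_stat) (t / c) - complex_of_real (exp (- t\<^sup>2 / 2))) \<le> 2 * t\<^sup>2 / (c * s)"
    using norm_char_cov_stat_le[OF assms, of "t / c"] error_terms(2) unfolding c_def s(2) by simp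
  have corr: "norm (char (distr M borel corr_stat) t - char (distr M borel cov_stat) (t / c)) \<le> 2 * \<bar>t\<bar> / (c * s) + 32 / s"
    using norm_char_corr_stat_cov_stat_le[OF assms d, of t] error_terms(1) unfolding c_def d_def by simp
  have "norm (char (distr M borel corr_stat) t - complex_of_real (exp (- t\<^sup>2 / 2)))
      \<le> 2 * \<bar>t\<bar> / (c * s) + 32 / s + 2 * t\<^sup>2 / (c * s)"
    by (rule norm_diff_triangle_le[OF corr cov])
  also have "\<dots> = (32 + 2 * (\<bar>t\<bar> + t\<^sup>2) / c) / s"
    using c s(1) by (simp add: field_simps)
  finally show ?thesis unfolding s_def c_def .
qed

end

lemma tendsto_of_norm_diff_le:
  fixes f :: "nat \<Rightarrow> 'a::real_normed_vector" and g :: "nat \<Rightarrow> real"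
  assumes "\<And>n. 0 < n \<Longrightarrow> norm (f n - L) \<le> K / g n" and "filterlim g at_top sequentially"
  shows "f \<longlonglongrightarrow> L"
proof -
  have "(\<lambda>n. f n - L) \<longlonglongrightarrow> 0"
  proof (rule Lim_null_comparison)
    show "\<forall>\<^sub>F n in sequentially. norm (f n - L) \<le> K / g n"
      using assms(1) by (intro eventually_sequentiallyI[of 1]) auto
    show "(\<lambda>n. K / g n) \<longlonglongrightarrow> 0"
      by (intro tendsto_divide_0[OF tendsto_const] filterlim_at_top_imp_at_infinity assms(2))
  qed
  then show ?thesis by (simp add: LIM_zero_iff)
qed

lemma real_distribution_distr_sample_stats:
  assumes "indep_equicorr_pair M n r X Y"
  shows "real_distribution (distr M borel (\<lambda>\<omega>. sqrt (real n) * sample_cov n (\<lambda>i. X i \<omega>) (\<lambda>i. Y i \<omega>)))"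
    and "real_distribution (distr M borel (\<lambda>\<omega>. sqrt (real n) * sample_corr n (\<lambda>i. X i \<omega>) (\<lambda>i. Y i \<omega>)))"
proof -
  interpret indep_equicorr_pair M n r X Y by (fact assms)
  show "real_distribution (distr M borel cov_stat)" "real_distribution (distr M borel corr_stat)"
    by (simp_all add: real_distribution_distr)
qed

lemma weak_conv_cov_stat:
  assumes pair: "\<And>n. indep_equicorr_pair (M n) n r (X n) (Y n)"
  shows "weak_conv_m (\<lambda>n. distr (M n) borel (\<lambda>\<omega>. sqrt (real n) * sample_cov n (\<lambda>i. X n i \<omega>) (\<lambda>i. Y n i \<omega>)))
           (density lborel (normal_density 0 (1 - r)))"
proof (rule levy_continuity)
  have r: "0 < 1 - r"
    using indep_equicorr_pair.r_less_1[OF pair] by simp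
  show "real_distribution (density lborel (normal_density 0 (1 - r)))"
    using r by (rule real_distribution_normal_density)
  fix t
  show "(\<lambda>n. char (distr (M n) borel (\<lambda>\<omega>. sqrt (real n) * sample_cov n (\<lambda>i. X n i \<omega>) (\<lambda>i. Y n i \<omega>))) t)
          \<longlonglongrightarrow> char (density lborel (normal_density 0 (1 - r))) t"
    unfolding char_normal_density[OF r]
    by (rule tendsto_of_norm_diff_le[OF indep_equicorr_pair.norm_char_cov_stat_le[OF pair]])
      (auto intro: filterlim_compose[OF sqrt_at_top filterlim_real_sequentially])
qed (rule real_distribution_distr_sample_stats(1)[OF pair])

lemma weak_conv_corr_stat:
  assumes pair: "\<And>n. indep_equicorr_pair (M n) n r (X n) (Y n)"
  shows "weak_conv_m (\<lambda>n. distr (M n) borel (\<lambda>\<omega>. sqrt (real n) * sample_corr n (\<lambda>i. X n i \<omega>) (\<lambda>i. Y n i \<omega>)))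
           (density lborel std_normal_density)"
proof (rule levy_continuity)
  fix t
  show "(\<lambda>n. char (distr (M n) borel (\<lambda>\<omega>. sqrt (real n) * sample_corr n (\<lambda>i. X n i \<omega>) (\<lambda>i. Y n i \<omega>))) t)
          \<longlonglongrightarrow> char (density lborel std_normal_density) t"
    unfolding char_std_normal_distribution
    by (rule tendsto_of_norm_diff_le[OF indep_equicorr_pair.norm_char_corr_stat_le[OF pair]])
      (auto intro: filterlim_compose[OF sqrt_at_top] filterlim_compose[OF sqrt_at_top filterlim_real_sequentially])
qed (use real_distribution_distr_sample_stats(2)[OF pair] real_dist_normal_dist in auto)

theorem corollary2:
  fixes r :: real
    and M :: "nat \<Rightarrow> 'a measure"
    and X Y :: "nat \<Rightarrow> nat \<Rightarrow> 'a \<Rightarrow> real"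
  assumes r: "0 < r" "r < 1"
    and prob: "\<And>n. prob_space (M n)"
    and normX: "\<And>n. is_mvn0 (M n) n (equicorr r) (X n)"
    and normY: "\<And>n. is_mvn0 (M n) n (equicorr r) (Y n)"
    and indep: "\<And>n. prob_space.indep_var (M n)
                   (PiM {..<n} (\<lambda>_. borel)) (\<lambda>\<omega>. \<lambda>i\<in>{..<n}. X n i \<omega>)
                   (PiM {..<n} (\<lambda>_. borel)) (\<lambda>\<omega>. \<lambda>i\<in>{..<n}. Y n i \<omega>)"
  shows "weak_conv_m
           (\<lambda>n. distr (M n) borel (\<lambda>\<omega>. sqrt (real n) * sample_cov n (\<lambda>i. X n i \<omega>) (\<lambda>i. Y n i \<omega>)))
           (density lborel (normal_density 0 (1 - r)))
       \<and> weak_conv_m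
           (\<lambda>n. distr (M n) borel (\<lambda>\<omega>. sqrt (real n) * sample_corr n (\<lambda>i. X n i \<omega>) (\<lambda>i. Y n i \<omega>)))
           (density lborel std_normal_density)"
proof -
  have pair: "indep_equicorr_pair (M n) n r (X n) (Y n)" for n
    using prob normX normY r indep by (simp add: indep_equicorr_pair_def indep_equicorr_pair_axioms_def)
  show ?thesis
    using weak_conv_cov_stat[OF pair] weak_conv_corr_stat[OF pair] by blast
qed

end
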